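(* (i) For every combinatorial line $U\in \mathscr{L}$ the pair $\Pi^U=(P^U, \psi_{U})$ is a picture over $G$ with $\Pi^U_x=\psi_U^{-1}(x)=U$. (ii) If $U, V\in \mathscr{L}$ are distinct, then $P^U\cap P^V=U\cap V$.
   Context: Let $k\ge 3$ and let $G$ be a $k$-uniform hypergraph. A $k$-element subset $L$ of a Hales-Jewett cube $[k]^m$ is a quasiline if for every coordinate the entries of the points of $L$ in that coordinate are either all identical or mutually distinct. Over an arbitrary finite alphabet $A$, a combinatorial line in $A^n$ is the image of a map $\eta\colon A\to A^n$ given by a partition $[n]=C\,\dot\cup\, M$ with $M\neq\emptyset$ and a function $g\colon C\to A$, where the $i$-th coordinate of $\eta(a)$ is $g(i)$ for $i\in C$ and $a$ for $i\in M$ (such $\eta$ is a combinatorial embedding). A picture over $G$ is a pair $\Pi=(P,\psi)$ with $P\subseteq [k]^m$ and $\psi\colon P\to V(G)$ such that every quasiline $L\subseteq P$ is a combinatorial line with $\psi[L]\in E(G)$; for a vertex $x$ of $G$ the music line is $\Pi_x=\psi^{-1}(x)$. Now let $\Pi=(P,\psi_\Pi)$ be a picture over $G$ with $P\subseteq[k]^m$, let $x$ be a vertex of $G$, and, viewing the music line $\Pi_x$ as an alphabet, let $\mathscr{L}$ be a collection of combinatorial lines in the $n$-dimensional Hales-Jewett cube $\Pi_x^n$. For every $U\in\mathscr{L}$ let $\eta_U\colon \Pi_x\to \Pi_x^n$ be the combinatorial embedding with image $U$, given by a partition $[n]=C\,\dot\cup\, M$ ($M\ne\emptyset$) and $g\colon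 C\to\Pi_x$. Let $\eta_U^+\colon [k]^m\to([k]^m)^n=[k]^{mn}$ be its extension defined by the same data: the $i$-th block of $\eta_U^+(a)$ is $g(i)$ for $i\in C$ and $a$ for $i\in M$ (this is a combinatorial embedding over the alphabet $[k]$, and it maps quasilines to quasilines and combinatorial lines to combinatorial lines). Set $P^U=\eta_U^+(P)$ and $\psi_U=\psi_\Pi\circ(\eta_U^+|_{P})^{-1}\colon P^U\to V(G)$. *)

theory Defs
  imports Main
begin

text \<open>Points of the Hales-Jewett cube [k]^m are lists of length m with entries in {1..k}.
  A point of ([k]^m)^n is a list of n such lists; it is identified with a point of
  [k]^(m n) via concat (block i of the concatenation is the i-th entry).\<close>

definition hj_cube :: "nat \<Rightarrow> nat \<Rightarrow> nat list set" where
  "hj_cube k m = {p. length p = m \<and> set p \<subseteq> {1..k}}"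

definition comb_emb :: "nat \<Rightarrow> nat set \<Rightarrow> (nat \<Rightarrow> 'a) \<Rightarrow> 'a \<Rightarrow> 'a list" where
  "comb_emb n M g a = map (\<lambda>i. if i \<in> M then a else g i) [0..<n]"

definition comb_data :: "'a set \<Rightarrow> nat \<Rightarrow> nat set \<Rightarrow> (nat \<Rightarrow> 'a) \<Rightarrow> bool" where
  "comb_data A n M g \<longleftrightarrow> M \<noteq> {} \<and> M \<subseteq> {0..<n} \<and> (\<forall>i \<in> {0..<n} - M. g i \<in> A)"

definition comb_line :: "'a set \<Rightarrow> nat \<Rightarrow> 'a list set \<Rightarrow> bool" where
  "comb_line A n L \<longleftrightarrow> (\<exists>M g. comb_data A n M g \<and> L = comb_emb n M g ` A)"

definition quasiline :: "nat \<Rightarrow> nat \<Rightarrow> nat list set \<Rightarrow> bool" where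
  "quasiline k m L \<longleftrightarrow> L \<subseteq> hj_cube k m \<and> card L = k \<and>
     (\<forall>i<m. (\<forall>p\<in>L. \<forall>q\<in>L. p ! i = q ! i) \<or> inj_on (\<lambda>p. p ! i) L)"

definition uniform_hypergraph :: "nat \<Rightarrow> 'v set \<Rightarrow> 'v set set \<Rightarrow> bool" where
  "uniform_hypergraph k VG E \<longleftrightarrow> (\<forall>e\<in>E. e \<subseteq> VG \<and> card e = k)"

definition picture :: "nat \<Rightarrow> nat \<Rightarrow> 'v set \<Rightarrow> 'v set set \<Rightarrow> nat list set \<Rightarrow> (nat list \<Rightarrow> 'v) \<Rightarrow> bool" where
  "picture k m VG E P \<psi> \<longleftrightarrow> P \<subseteq> hj_cube k m \<and> \<psi> ` P \<subseteq> VG \<and>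
     (\<forall>L. L \<subseteq> P \<longrightarrow> quasiline k m L \<longrightarrow> comb_line {1..k} m L \<and> \<psi> ` L \<in> E)"

definition music_line :: "nat list set \<Rightarrow> (nat list \<Rightarrow> 'v) \<Rightarrow> 'v \<Rightarrow> nat list set" where
  "music_line P \<psi> x = {p \<in> P. \<psi> p = x}"

definition eta_plus :: "nat \<Rightarrow> nat set \<Rightarrow> (nat \<Rightarrow> nat list) \<Rightarrow> nat list \<Rightarrow> nat list" where
  "eta_plus n M g a = concat (comb_emb n M g a)"

end

theory Submission
  imports Defs
begin

text \<open>The extension eta^+ writes a point a of [k]^m into every moving block, so reading a
  moving block recovers a: eta^+ is injective and every coordinate of a reappears as a coordinate
  of eta^+(a). Hence a quasiline of eta^+(P) pulls back to a quasiline of P, which is a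
  combinatorial line coloured by an edge, and eta^+ maps combinatorial lines to combinatorial
  lines (moving coordinates: position j of block i with i and j both moving). So the picture
  structure transports along eta^+, and its music line at x is eta^+(Pi_x) = U.

  For (ii), concatenation of blocks of equal length is injective, so a common point of P^U and
  P^V is a common word eta_U(a) = eta_V(b). Distinct lines agreeing in a word have different
  moving sets. A coordinate moving for one line but constant for the other shows that a or b is
  a constant value of a line, hence lies in Pi_x; the other one is such a value too, or equals it
  through a common moving coordinate.\<close>

lemma nth_concat_equal_length:
  assumes "\<forall>xs\<in>set xss. length xs = m" "i < length xss" "j < m"
  shows "concat xss ! (i * m + j) = xss ! i ! j"
  using assms
proof (induction xss arbitrary: i)
  case Nil
  then show ?case by simp
next
  case (Cons xs xss)
  then show ?case by (cases i) (auto simp: nth_append)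
qed

lemma block_index_less:
  fixes i j m n :: nat
  assumes "i < n" "j < m"
  shows "i * m + j < m * n"
proof -
  have "i * m + j < Suc i * m" using \<open>j < m\<close> by simp
  also have "\<dots> \<le> n * m" using \<open>i < n\<close> by (intro mult_le_mono1) simp
  finally show ?thesis by (simp add: mult.commute)
qed

lemma block_index_bounds:
  fixes t m n :: nat
  assumes "t < m * n"
  shows "t div m < n" "t mod m < m"
  using assms by (cases "m = 0"; simp add: less_mult_imp_div_less mult.commute)+

lemma length_comb_emb [simp]: "length (comb_emb n M g a) = n"
  by (simp add: comb_emb_def)

lemma nth_comb_emb: "i < n \<Longrightarrow> comb_emb n M g a ! i = (if i \<in> M then a else g i)"
  by (simp add: comb_emb_def)

lemma set_comb_emb_subset: "set (comb_emb n M g a) \<subseteq> insert a (g ` ({0..<n} - M))"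
  by (auto simp: comb_emb_def)

lemma comb_emb_eq_same_moving:
  assumes "comb_emb n M g1 a = comb_emb n M g2 b"
  shows "comb_emb n M g1 = comb_emb n M g2"
proof
  fix c
  show "comb_emb n M g1 c = comb_emb n M g2 c"
    using nth_comb_emb[of _ n M g1 a] nth_comb_emb[of _ n M g2 b] assms
    by (auto simp: comb_emb_def)
qed

lemma comb_emb_eq_imp_in_alphabet:
  assumes d1: "comb_data X n M1 g1" and d2: "comb_data X n M2 g2" and "M1 \<noteq> M2"
    and eq: "comb_emb n M1 g1 a = comb_emb n M2 g2 b"
  shows "a \<in> X"
proof (rule ccontr)
  assume a: "a \<notin> X"
  have coord: "(if i \<in> M1 then a else g1 i) = (if i \<in> M2 then b else g2 i)" if "i < n" for i
    using nth_comb_emb[OF that, of M1 g1 a] nth_comb_emb[OF that, of M2 g2 b] eq by simp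
  have "M1 \<subseteq> M2"
  proof
    fix i assume "i \<in> M1"
    then have "i < n" using d1 by (auto simp: comb_data_def)
    show "i \<in> M2"
      using coord[OF \<open>i < n\<close>] \<open>i \<in> M1\<close> \<open>i < n\<close> a d2 by (auto simp: comb_data_def split: if_splits)
  qed
  then obtain i where i: "i \<in> M2" "i \<notin> M1" using \<open>M1 \<noteq> M2\<close> by blast
  obtain j where j: "j \<in> M1" using d1 by (auto simp: comb_data_def)
  have "i < n" "j < n" using i j d2 \<open>M1 \<subseteq> M2\<close> by (auto simp: comb_data_def)
  have "a = b" using coord[OF \<open>j < n\<close>] j \<open>M1 \<subseteq> M2\<close> by auto
  moreover have "b = g1 i" using coord[OF \<open>i < n\<close>] i by simp
  moreover have "g1 i \<in> X" using d1 i \<open>i < n\<close> by (auto simp: comb_data_def)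
  ultimately show False using a by simp
qed

definition copies_coordinates :: "nat \<Rightarrow> nat \<Rightarrow> ('a list \<Rightarrow> 'a list) \<Rightarrow> 'a list set \<Rightarrow> bool" where
  "copies_coordinates m m' f P \<longleftrightarrow> (\<forall>j<m. \<exists>t<m'. \<forall>p\<in>P. f p ! t = p ! j)"

lemma copies_coordinates_subset:
  "copies_coordinates m m' f P \<Longrightarrow> L \<subseteq> P \<Longrightarrow> copies_coordinates m m' f L"
  unfolding copies_coordinates_def by blast

lemma inj_on_if_copies_coordinates:
  assumes "\<forall>p\<in>P. length p = m" "copies_coordinates m m' f P"
  shows "inj_on f P"
proof (rule inj_onI)
  fix p q assume "p \<in> P" "q \<in> P" "f p = f q"
  show "p = q"
  proof (rule nth_equalityI)
    show "length p = length q" using \<open>p \<in> P\<close> \<open>q \<in> P\<close> assms(1) by simp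
    fix j assume "j < length p"
    then obtain t where "\<forall>p\<in>P. f p ! t = p ! j"
      using \<open>p \<in> P\<close> assms by (auto simp: copies_coordinates_def)
    then show "p ! j = q ! j" using \<open>p \<in> P\<close> \<open>q \<in> P\<close> \<open>f p = f q\<close> by metis
  qed
qed

lemma quasiline_if_copies_coordinates:
  assumes ql: "quasiline k m' (f ` L)" and L: "L \<subseteq> hj_cube k m" and inj: "inj_on f L"
    and copy: "copies_coordinates m m' f L"
  shows "quasiline k m L"
proof -
  have card: "card (f ` L) = k"
    and coords: "\<forall>t<m'. (\<forall>p\<in>f ` L. \<forall>q\<in>f ` L. p ! t = q ! t) \<or> inj_on (\<lambda>p. p ! t) (f ` L)"
    using ql unfolding quasiline_def by blast+
  have "(\<forall>p\<in>L. \<forall>q\<in>L. p ! j = q ! j) \<or> inj_on (\<lambda>p. p ! j) L" if "j < m" for j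
  proof -
    obtain t where "t < m'" and t: "\<And>p. p \<in> L \<Longrightarrow> f p ! t = p ! j"
      using copy \<open>j < m\<close> unfolding copies_coordinates_def by blast
    from coords \<open>t < m'\<close> consider
      (const) "\<forall>p\<in>f ` L. \<forall>q\<in>f ` L. p ! t = q ! t" | (injective) "inj_on (\<lambda>p. p ! t) (f ` L)"
      by blast
    then show ?thesis
    proof cases
      case const
      have "p ! j = q ! j" if "p \<in> L" "q \<in> L" for p q
        using const that by (metis t imageI)
      then show ?thesis by blast
    next
      case injective
      then have "inj_on ((\<lambda>p. p ! t) \<circ> f) L" using \<open>inj_on f L\<close> by (rule comp_inj_on[rotated])
      moreover have "((\<lambda>p. p ! t) \<circ> f) p = p ! j" if "p \<in> L" for p
        using t[OF that] by (simp only: comp_apply)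
      ultimately have "inj_on (\<lambda>p. p ! j) L" by (simp only: cong: inj_on_cong)
      then show ?thesis ..
    qed
  qed
  then show ?thesis
    using L card card_image[OF inj] unfolding quasiline_def by simp
qed

lemma picture_image:
  assumes pic: "picture k m VG E P \<psi>" and cube: "f ` P \<subseteq> hj_cube k m'"
    and copy: "copies_coordinates m m' f P"
    and lines: "\<forall>L\<subseteq>P. comb_line {1..k} m L \<longrightarrow> comb_line {1..k} m' (f ` L)"
  shows "picture k m' VG E (f ` P) (\<lambda>q. \<psi> (inv_into P f q))"
proof -
  have P: "P \<subseteq> hj_cube k m" using pic by (simp add: picture_def)
  have "\<forall>p\<in>P. length p = m" using P by (auto simp: hj_cube_def)
  then have inj: "inj_on f P" using copy by (rule inj_on_if_copies_coordinates)
  have "comb_line {1..k} m' L \<and> (\<lambda>q. \<psi> (inv_into P f q)) ` L \<in> E"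
    if "L \<subseteq> f ` P" "quasiline k m' L" for L
  proof -
    define L' where "L' = inv_into P f ` L"
    have L'P: "L' \<subseteq> P" using \<open>L \<subseteq> f ` P\<close> by (auto simp: L'_def inv_into_into)
    have L: "L = f ` L'"
      using image_inv_into_cancel[OF refl \<open>L \<subseteq> f ` P\<close>] by (simp add: L'_def)
    have "quasiline k m' (f ` L')" using \<open>quasiline k m' L\<close> L by simp
    moreover have "L' \<subseteq> hj_cube k m" using L'P P by blast
    ultimately have "quasiline k m L'"
      using inj_on_subset[OF inj L'P] copies_coordinates_subset[OF copy L'P]
      by (rule quasiline_if_copies_coordinates)
    then have "comb_line {1..k} m L'" "\<psi> ` L' \<in> E" using pic L'P by (auto simp: picture_def)
    moreover have "(\<lambda>q. \<psi> (inv_into P f q)) ` L = \<psi> ` L'"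
      unfolding L image_image using L'P inv_into_f_f[OF inj] by (intro image_cong) auto
    ultimately show ?thesis using lines L'P unfolding L by simp
  qed
  moreover have "(\<lambda>q. \<psi> (inv_into P f q)) ` f ` P \<subseteq> VG"
    using pic inj by (auto simp: picture_def)
  ultimately show ?thesis using cube by (simp add: picture_def)
qed

lemma music_line_image:
  assumes "inj_on f P"
  shows "music_line (f ` P) (\<lambda>q. \<psi> (inv_into P f q)) x = f ` music_line P \<psi> x"
  using assms by (auto simp: music_line_def)

lemma length_eta_plus:
  assumes "length a = m" "\<forall>i\<in>{0..<n}-M. length (g i) = m"
  shows "length (eta_plus n M g a) = m * n"
proof -
  have "map length (comb_emb n M g a) = replicate n m"
    using assms by (auto simp: comb_emb_def intro!: nth_equalityI)
  then show ?thesis by (simp add: eta_plus_def length_concat sum_list_replicate)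
qed

lemma nth_eta_plus:
  assumes "length a = m" "\<forall>i\<in>{0..<n}-M. length (g i) = m" "i < n" "j < m"
  shows "eta_plus n M g a ! (i * m + j) = (if i \<in> M then a ! j else g i ! j)"
proof -
  have "\<forall>xs\<in>set (comb_emb n M g a). length xs = m"
    using set_comb_emb_subset[of n M g a] assms by blast
  then show ?thesis
    using assms by (simp add: eta_plus_def nth_concat_equal_length nth_comb_emb)
qed

lemma eta_plus_in_hj_cube:
  assumes "a \<in> hj_cube k m" "g ` ({0..<n} - M) \<subseteq> hj_cube k m"
  shows "eta_plus n M g a \<in> hj_cube k (m * n)"
proof -
  have "length (eta_plus n M g a) = m * n"
    using assms by (intro length_eta_plus) (auto simp: hj_cube_def)
  moreover have "\<forall>xs\<in>set (comb_emb n M g a). set xs \<subseteq> {1..k}"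
    using assms set_comb_emb_subset[of n M g a] unfolding hj_cube_def by blast
  then have "set (eta_plus n M g a) \<subseteq> {1..k}"
    by (auto simp: eta_plus_def)
  ultimately show ?thesis by (simp add: hj_cube_def)
qed

lemma eta_plus_copies_coordinates:
  assumes "M \<noteq> {}" "M \<subseteq> {0..<n}" "\<forall>p\<in>P. length p = m"
    and "\<forall>i\<in>{0..<n}-M. length (g i) = m"
  shows "copies_coordinates m (m * n) (eta_plus n M g) P"
  unfolding copies_coordinates_def
proof (intro allI impI)
  fix j assume "j < m"
  obtain i where "i \<in> M" "i < n" using assms(1,2) by force
  then show "\<exists>t<m * n. \<forall>p\<in>P. eta_plus n M g p ! t = p ! j"
    using \<open>j < m\<close> assms(3,4) by (auto simp: nth_eta_plus intro!: exI[of _ "i * m + j"] block_index_less)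
qed

lemma inj_on_eta_plus:
  assumes "M \<noteq> {}" "M \<subseteq> {0..<n}" "\<forall>p\<in>P. length p = m"
    and "\<forall>i\<in>{0..<n}-M. length (g i) = m"
  shows "inj_on (eta_plus n M g) P"
  using assms(3) eta_plus_copies_coordinates[OF assms] by (rule inj_on_if_copies_coordinates)

lemma eta_plus_eq_imp_comb_emb_eq:
  assumes "eta_plus n M1 g1 a = eta_plus n M2 g2 b" "length a = m" "length b = m"
    "\<forall>i\<in>{0..<n}-M1. length (g1 i) = m" "\<forall>i\<in>{0..<n}-M2. length (g2 i) = m"
  shows "comb_emb n M1 g1 a = comb_emb n M2 g2 b"
proof (rule concat_injective)
  show "concat (comb_emb n M1 g1 a) = concat (comb_emb n M2 g2 b)"
    using assms(1) by (simp add: eta_plus_def)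
  show "\<forall>(x, y)\<in>set (zip (comb_emb n M1 g1 a) (comb_emb n M2 g2 b)). length x = length y"
    using assms(2-) by (auto simp: set_zip nth_comb_emb)
qed simp

text \<open>Moving set and constants of the image under eta^+ of the line with data M', g';
  coordinate t of [k]^(m n) is position t mod m of block t div m.\<close>

definition comp_moving :: "nat \<Rightarrow> nat \<Rightarrow> nat set \<Rightarrow> nat set \<Rightarrow> nat set" where
  "comp_moving n m M M' = {t. t < m * n \<and> t div m \<in> M \<and> t mod m \<in> M'}"

definition comp_const :: "nat \<Rightarrow> nat set \<Rightarrow> (nat \<Rightarrow> 'a list) \<Rightarrow> (nat \<Rightarrow> 'a) \<Rightarrow> nat \<Rightarrow> 'a" where
  "comp_const m M g g' t = (if t div m \<in> M then g' (t mod m) else g (t div m) ! (t mod m))"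

lemma eta_plus_comb_emb:
  assumes "\<forall>i\<in>{0..<n}-M. length (g i) = m"
  shows "eta_plus n M g (comb_emb m M' g' c) =
    comb_emb (m * n) (comp_moving n m M M') (comp_const m M g g') c"
    (is "?lhs = comb_emb _ ?M ?g c")
proof (rule nth_equalityI)
  show "length ?lhs = length (comb_emb (m * n) ?M ?g c)"
    using assms by (simp add: length_eta_plus)
  fix t assume "t < length ?lhs"
  then have t: "t < m * n" using assms by (simp add: length_eta_plus)
  then have "t div m < n" "t mod m < m" by (rule block_index_bounds)+
  then have "?lhs ! (t div m * m + t mod m) =
      (if t div m \<in> M then comb_emb m M' g' c ! (t mod m) else g (t div m) ! (t mod m))"
    using assms by (intro nth_eta_plus) simp_all
  then show "?lhs ! t = comb_emb (m * n) ?M ?g c ! t"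
    using t \<open>t mod m < m\<close> by (simp add: nth_comb_emb comp_moving_def comp_const_def)
qed

lemma comb_data_comp:
  assumes d: "comb_data A m M' g'" and M: "M \<noteq> {}" "M \<subseteq> {0..<n}"
    and g: "\<forall>i\<in>{0..<n}-M. length (g i) = m \<and> set (g i) \<subseteq> A"
  shows "comb_data A (m * n) (comp_moving n m M M') (comp_const m M g g')"
proof -
  obtain i j where "i \<in> M" "j \<in> M'" using M d by (auto simp: comb_data_def)
  moreover have "i < n" "j < m" using \<open>i \<in> M\<close> \<open>j \<in> M'\<close> M d by (auto simp: comb_data_def)
  ultimately have "i * m + j \<in> comp_moving n m M M'"
    by (simp add: comp_moving_def block_index_less)
  moreover have "comp_moving n m M M' \<subseteq> {0..<m * n}" by (auto simp: comp_moving_def)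
  moreover have "comp_const m M g g' t \<in> A" if t: "t \<in> {0..<m * n} - comp_moving n m M M'" for t
  proof -
    have "t div m < n" "t mod m < m" using t by (auto intro: block_index_bounds)
    show ?thesis
    proof (cases "t div m \<in> M")
      case True
      then show ?thesis using t d \<open>t mod m < m\<close> by (auto simp: comb_data_def comp_moving_def comp_const_def)
    next
      case False
      then have "g (t div m) ! (t mod m) \<in> set (g (t div m))" "set (g (t div m)) \<subseteq> A"
        using g \<open>t div m < n\<close> \<open>t mod m < m\<close> by auto
      then show ?thesis using False by (auto simp: comp_const_def)
    qed
  qed
  ultimately show ?thesis unfolding comb_data_def by blast
qed

lemma comb_line_eta_plus_image:
  assumes "comb_line A m L" "M \<noteq> {}" "M \<subseteq> {0..<n}"
    and "\<forall>i\<in>{0..<n}-M. length (g i) = m \<and> set (g i) \<subseteq> A"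
  shows "comb_line A (m * n) (eta_plus n M g ` L)"
proof -
  obtain M' g' where d: "comb_data A m M' g'" and L: "L = comb_emb m M' g' ` A"
    using assms(1) unfolding comb_line_def by blast
  show ?thesis
    unfolding comb_line_def L image_image
    using assms(4) comb_data_comp[OF d assms(2-4)] by (auto simp: eta_plus_comb_emb)
qed

lemma picture_eta_plus:
  assumes pic: "picture k m VG E P \<psi>" and M: "M \<noteq> {}" "M \<subseteq> {0..<n}"
    and g: "g ` ({0..<n} - M) \<subseteq> P"
  shows "picture k (m * n) VG E (eta_plus n M g ` P) (\<lambda>q. \<psi> (inv_into P (eta_plus n M g) q))"
proof (rule picture_image[OF pic])
  have P: "P \<subseteq> hj_cube k m" using pic by (simp add: picture_def)
  then have g_cube: "\<forall>i\<in>{0..<n}-M. length (g i) = m \<and> set (g i) \<subseteq> {1..k}"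
    using g by (auto simp: hj_cube_def)
  show "eta_plus n M g ` P \<subseteq> hj_cube k (m * n)"
    using P g by (auto intro: eta_plus_in_hj_cube)
  show "copies_coordinates m (m * n) (eta_plus n M g) P"
    using P M g_cube by (intro eta_plus_copies_coordinates) (auto simp: hj_cube_def)
  show "\<forall>L\<subseteq>P. comb_line {1..k} m L \<longrightarrow> comb_line {1..k} (m * n) (eta_plus n M g ` L)"
    using M g_cube comb_line_eta_plus_image by blast
qed

lemma eta_plus_image_inter:
  assumes P: "\<forall>p\<in>P. length p = m" and X: "X \<subseteq> P"
    and d1: "comb_data X n M1 g1" and d2: "comb_data X n M2 g2"
    and lines: "comb_emb n M1 g1 ` X \<noteq> comb_emb n M2 g2 ` X"
  shows "eta_plus n M1 g1 ` P \<inter> eta_plus n M2 g2 ` P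
    = concat ` (comb_emb n M1 g1 ` X \<inter> comb_emb n M2 g2 ` X)"
proof
  show "concat ` (comb_emb n M1 g1 ` X \<inter> comb_emb n M2 g2 ` X)
      \<subseteq> eta_plus n M1 g1 ` P \<inter> eta_plus n M2 g2 ` P"
    using X by (force simp: eta_plus_def)
next
  show "eta_plus n M1 g1 ` P \<inter> eta_plus n M2 g2 ` P
      \<subseteq> concat ` (comb_emb n M1 g1 ` X \<inter> comb_emb n M2 g2 ` X)"
  proof
    fix q assume "q \<in> eta_plus n M1 g1 ` P \<inter> eta_plus n M2 g2 ` P"
    then obtain a b where "a \<in> P" "b \<in> P" and q: "q = eta_plus n M1 g1 a" "q = eta_plus n M2 g2 b"
      by blast
    have "\<forall>i\<in>{0..<n}-M1. length (g1 i) = m" "\<forall>i\<in>{0..<n}-M2. length (g2 i) = m"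
      using d1 d2 X P by (auto simp: comb_data_def)
    then have w: "comb_emb n M1 g1 a = comb_emb n M2 g2 b"
      using q P \<open>a \<in> P\<close> \<open>b \<in> P\<close> by (intro eta_plus_eq_imp_comb_emb_eq) auto
    have "M1 \<noteq> M2"
    proof
      assume "M1 = M2"
      then have "comb_emb n M1 g1 = comb_emb n M2 g2"
        using w comb_emb_eq_same_moving[of n M2 g1 a g2 b] by simp
      then show False using lines by simp
    qed
    have "a \<in> X" using comb_emb_eq_imp_in_alphabet[OF d1 d2 \<open>M1 \<noteq> M2\<close> w] .
    moreover have "b \<in> X" using comb_emb_eq_imp_in_alphabet[OF d2 d1 \<open>M1 \<noteq> M2\<close>[symmetric] w[symmetric]] .
    ultimately have "comb_emb n M1 g1 a \<in> comb_emb n M1 g1 ` X \<inter> comb_emb n M2 g2 ` X"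
      using w by blast
    then show "q \<in> concat ` (comb_emb n M1 g1 ` X \<inter> comb_emb n M2 g2 ` X)"
      using q by (simp add: eta_plus_def)
  qed
qed

theorem fact4p4:
  fixes k m n :: nat
    and VG :: "'v set" and E :: "'v set set"
    and P :: "nat list set" and \<psi> :: "nat list \<Rightarrow> 'v" and x :: 'v
    and \<L> :: "nat list list set set"
    and MU :: "nat list list set \<Rightarrow> nat set"
    and gU :: "nat list list set \<Rightarrow> nat \<Rightarrow> nat list"
  assumes "k \<ge> 3"
    and "uniform_hypergraph k VG E"
    and "picture k m VG E P \<psi>"
    and "x \<in> VG"
    and "\<forall>U\<in>\<L>. comb_data (music_line P \<psi> x) n (MU U) (gU U) \<and>
                 U = comb_emb n (MU U) (gU U) ` music_line P \<psi> x"
  shows "(\<forall>U\<in>\<L>.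
            picture k (m * n) VG E (eta_plus n (MU U) (gU U) ` P)
              (\<lambda>q. \<psi> (inv_into P (eta_plus n (MU U) (gU U)) q)) \<and>
            music_line (eta_plus n (MU U) (gU U) ` P)
              (\<lambda>q. \<psi> (inv_into P (eta_plus n (MU U) (gU U)) q)) x = concat ` U)
       \<and> (\<forall>U\<in>\<L>. \<forall>V\<in>\<L>. U \<noteq> V \<longrightarrow>
            eta_plus n (MU U) (gU U) ` P \<inter> eta_plus n (MU V) (gU V) ` P = concat ` (U \<inter> V))"
proof (intro conjI ballI impI)
  let ?X = "music_line P \<psi> x"
  have len: "\<forall>p\<in>P. length p = m" using assms(3) by (auto simp: picture_def hj_cube_def)
  have X: "?X \<subseteq> P" by (auto simp: music_line_def)
  note line = assms(5)[rule_format]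
  fix U assume "U \<in> \<L>"
  then have M: "MU U \<noteq> {}" "MU U \<subseteq> {0..<n}" and g: "gU U ` ({0..<n} - MU U) \<subseteq> P"
    using line X by (auto simp: comb_data_def)
  show "picture k (m * n) VG E (eta_plus n (MU U) (gU U) ` P)
      (\<lambda>q. \<psi> (inv_into P (eta_plus n (MU U) (gU U)) q))"
    using picture_eta_plus[OF assms(3) M g] .
  have "inj_on (eta_plus n (MU U) (gU U)) P"
    using M g len by (intro inj_on_eta_plus) auto
  then have "music_line (eta_plus n (MU U) (gU U) ` P)
      (\<lambda>q. \<psi> (inv_into P (eta_plus n (MU U) (gU U)) q)) x = eta_plus n (MU U) (gU U) ` ?X"
    by (rule music_line_image)
  also have "\<dots> = concat ` U"
    unfolding eta_plus_def image_image[symmetric] using line[OF \<open>U \<in> \<L>\<close>] by simp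
  finally show "music_line (eta_plus n (MU U) (gU U) ` P)
      (\<lambda>q. \<psi> (inv_into P (eta_plus n (MU U) (gU U)) q)) x = concat ` U" .
  fix V assume "V \<in> \<L>" "U \<noteq> V"
  then show "eta_plus n (MU U) (gU U) ` P \<inter> eta_plus n (MU V) (gU V) ` P = concat ` (U \<inter> V)"
    using line[OF \<open>U \<in> \<L>\<close>] line[OF \<open>V \<in> \<L>\<close>] len X
    by (metis eta_plus_image_inter)
qed

end
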